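(* Let $r\geq 3$ be an integer such that an affine plane of order $r$ exists, and let $\mathcal{H}_r=(V\setminus S,E)$ be the hypergraph defined below. Under the uniform weight assignment, the top-level of $\mathcal{H}_r$ is perturbable.
   Context: An affine plane of order $r$ is an $r$-uniform hypergraph on $r^2$ points with $r(r+1)$ lines such that every pair of distinct points lies in exactly one line; its lines partition into $r+1$ parallel classes $L_1,\dots,L_{r+1}$, each consisting of $r$ pairwise disjoint lines covering all points. Given an affine plane $\mathcal{G}_r=(V,\mathcal{L})$ of order $r$, label its points $v_{i,j}$, $i,j\in[r]$, so that $L_1=\{\{v_{i,1},\dots,v_{i,r}\}: i\in[r]\}$ (rows) and $L_{r+1}=\{\{v_{1,i},\dots,v_{r,i}\}: i\in[r]\}$ (columns). Let $S=\{v_{r,i}: i\in[r-1]\}\cup\{v_{r-1,r}\}$. The hypergraph $\mathcal{H}_r$ has vertex set $V\setminus S$ and edge set $E=\{e\setminus S: e\in\mathcal{L}\setminus L_{r+1}\}$ (i.e. delete the lines of $L_{r+1}$ and remove the vertices of $S$ from each remaining line). A weight assignment on a hypergraph with vertex set $W$ is a function $w:W\to\mathbb{R}_{\ge 0}$ with $\sum_{v\in W}w(v)=1$; the uniform weight assignment is $w(v)=1/|W|$; the weight of a set $T$ is $w(T)=\sum_{v\in T}w(v)$. The top-level of a hypergraph $H=(W,E)$ with respect to $w$ is the hypergraph $(W,E')$ where $E'$ is the set of edges of maximum weight. A perturbation on a hypergraph $H=(W,E)$ is a function $p:W\to\mathbb{R}$ with $\sum_{v\in W}p(v)=0$ and $\sum_{v\in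 e}p(v)<0$ for every $e\in E$; $H$ is perturbable if a perturbation exists. *)

theory Defs
  imports Complex_Main
begin

definition affine_plane :: "nat \<Rightarrow> 'a set \<Rightarrow> 'a set set \<Rightarrow> bool" where
  "affine_plane r V L \<longleftrightarrow>
     finite V \<and> card V = r^2 \<and> L \<subseteq> Pow V \<and> (\<forall>l\<in>L. card l = r) \<and>
     finite L \<and> card L = r * (r + 1) \<and>
     (\<forall>x\<in>V. \<forall>y\<in>V. x \<noteq> y \<longrightarrow> (\<exists>!l. l \<in> L \<and> x \<in> l \<and> y \<in> l))"

definition parallel_class :: "nat \<Rightarrow> 'a set \<Rightarrow> 'a set set \<Rightarrow> 'a set set \<Rightarrow> bool" where
  "parallel_class r V L P \<longleftrightarrow>
     P \<subseteq> L \<and> card P = r \<and> (\<forall>l1\<in>P. \<forall>l2\<in>P. l1 \<noteq> l2 \<longrightarrow> l1 \<inter> l2 = {}) \<and> \<Union>P = V"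

definition parallel_classes :: "nat \<Rightarrow> 'a set \<Rightarrow> 'a set set \<Rightarrow> (nat \<Rightarrow> 'a set set) \<Rightarrow> bool" where
  "parallel_classes r V L P \<longleftrightarrow>
     (\<forall>i\<in>{1..r+1}. parallel_class r V L (P i)) \<and>
     (\<forall>i\<in>{1..r+1}. \<forall>j\<in>{1..r+1}. i \<noteq> j \<longrightarrow> P i \<inter> P j = {}) \<and>
     (\<Union>i\<in>{1..r+1}. P i) = L"

definition weight :: "('a \<Rightarrow> real) \<Rightarrow> 'a set \<Rightarrow> real" where
  "weight w T = (\<Sum>v\<in>T. w v)"

definition uniform_weight :: "'a set \<Rightarrow> 'a \<Rightarrow> real" where
  "uniform_weight W = (\<lambda>v. 1 / real (card W))"

text \<open>Edge set of the top-level of (W, E) w.r.t. w (its vertex set is still W).\<close>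
definition top_level_edges :: "'a set set \<Rightarrow> ('a \<Rightarrow> real) \<Rightarrow> 'a set set" where
  "top_level_edges E w = {e \<in> E. \<forall>f\<in>E. weight w f \<le> weight w e}"

definition perturbation :: "'a set \<Rightarrow> 'a set set \<Rightarrow> ('a \<Rightarrow> real) \<Rightarrow> bool" where
  "perturbation W E p \<longleftrightarrow> (\<Sum>v\<in>W. p v) = 0 \<and> (\<forall>e\<in>E. (\<Sum>v\<in>e. p v) < 0)"

definition perturbable :: "'a set \<Rightarrow> 'a set set \<Rightarrow> bool" where
  "perturbable W E \<longleftrightarrow> (\<exists>p. perturbation W E p)"

definition S_set :: "nat \<Rightarrow> (nat \<Rightarrow> nat \<Rightarrow> 'a) \<Rightarrow> 'a set" where
  "S_set r v = {v r i | i. i \<in> {1..r-1}} \<union> {v (r - 1) r}"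

definition H_edges :: "nat \<Rightarrow> 'a set set \<Rightarrow> (nat \<Rightarrow> 'a set set) \<Rightarrow> 'a set \<Rightarrow> 'a set set" where
  "H_edges r L P S = (\<lambda>e. e - S) ` (L - P (r + 1))"

end

theory Submission
  imports Defs
begin

(* Under the uniform weight the top level consists of the edges of maximum size. Row 1 avoids S,
   so these are exactly the full lines of the plane avoiding S. Move weight onto the r - 1
   surviving points of row r - 1 and off the corner v r r, then subtract the mean. A row avoiding S
   is not row r - 1 (which contains v (r-1) r), so it misses the surviving points; any other line
   meets every row exactly once, hence meets row r - 1 at most once and, since only v r r survives
   in row r, passes through v r r. So every top edge has nonpositive tilt, while the total tilt
   r - 2 is positive. *)

lemma weight_uniform_weight:
  "weight (uniform_weight W) T = real (card T) / real (card W)"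
  by (simp add: weight_def uniform_weight_def)

lemma top_level_edges_uniform_weight:
  assumes "finite W" "W \<noteq> {}"
  shows "top_level_edges E (uniform_weight W) = {e \<in> E. \<forall>f\<in>E. card f \<le> card e}"
  using assms by (auto simp: top_level_edges_def weight_uniform_weight divide_le_cancel)

lemma top_level_edges_Diff_image:
  assumes "finite W" "W \<noteq> {}" and M: "\<And>l. l \<in> M \<Longrightarrow> finite l \<and> card l = k"
    and "l\<^sub>0 \<in> M" "l\<^sub>0 \<inter> S = {}"
  shows "top_level_edges ((\<lambda>l. l - S) ` M) (uniform_weight W) \<subseteq> {l \<in> M. l \<inter> S = {}}"
proof
  fix e assume "e \<in> top_level_edges ((\<lambda>l. l - S) ` M) (uniform_weight W)"
  then obtain l where l: "l \<in> M" "e = l - S" and "card (l\<^sub>0 - S) \<le> card (l - S)"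
    using assms(1,2,4) by (auto simp: top_level_edges_uniform_weight)
  then have "card l \<le> card (l - S)"
    using M assms(4,5) by (metis Diff_triv)
  then have "l - S = l"
    using M[OF l(1)] by (meson Diff_subset card_subset_eq card_mono order_antisym)
  then show "e \<in> {l \<in> M. l \<inter> S = {}}"
    using l by auto
qed

lemma perturbable_if_total_pos_edges_nonpos:
  fixes q :: "'a \<Rightarrow> real"
  assumes "finite W" and total: "0 < (\<Sum>x\<in>W. q x)"
    and edges: "\<And>e. e \<in> E \<Longrightarrow> finite e \<and> e \<noteq> {} \<and> (\<Sum>x\<in>e. q x) \<le> 0"
  shows "perturbable W E"
proof -
  define m where "m = (\<Sum>x\<in>W. q x) / card W"
  have "W \<noteq> {}"
    using total by auto
  then have "card W > 0"
    using assms(1) by (simp add: card_gt_0_iff)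
  then have "m > 0"
    using total by (simp add: m_def)
  have "perturbation W E (\<lambda>x. q x - m)"
    unfolding perturbation_def
  proof (intro conjI ballI)
    show "(\<Sum>x\<in>W. q x - m) = 0"
      using \<open>card W > 0\<close> by (simp add: sum_subtractf m_def)
  next
    fix e assume "e \<in> E"
    then have "card e > 0" "(\<Sum>x\<in>e. q x) \<le> 0"
      using edges by (auto simp: card_gt_0_iff)
    moreover have "0 < real (card e) * m"
      using \<open>m > 0\<close> \<open>card e > 0\<close> by simp
    ultimately show "(\<Sum>x\<in>e. q x - m) < 0"
      by (simp add: sum_subtractf)
  qed
  then show ?thesis
    unfolding perturbable_def by blast
qed

lemma affine_plane_card_Int_lines:
  assumes "affine_plane r V L" "l \<in> L" "m \<in> L" "l \<noteq> m"
  shows "card (l \<inter> m) \<le> 1"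
proof -
  have "finite l" "l \<subseteq> V" "m \<subseteq> V"
    using assms unfolding affine_plane_def by (auto intro: finite_subset)
  moreover have "x = y" if "x \<in> l \<inter> m" "y \<in> l \<inter> m" for x y
    using assms(1-4) that \<open>l \<subseteq> V\<close> unfolding affine_plane_def by blast
  ultimately show ?thesis
    by (simp add: card_le_Suc0_iff_eq)
qed

lemma affine_plane_card_Int_parallel_class:
  assumes plane: "affine_plane r V L" and P: "parallel_class r V L P"
    and "l \<in> L" "l \<notin> P" "m \<in> P"
  shows "card (l \<inter> m) = 1"
proof -
  have "finite P" "card P = r" "P \<subseteq> L" "\<Union>P = V"
    using P plane unfolding parallel_class_def affine_plane_def by (auto intro: finite_subset)
  have le1: "card (l \<inter> m') \<le> 1" if "m' \<in> P" for m'
    using affine_plane_card_Int_lines[OF plane \<open>l \<in> L\<close>] that \<open>P \<subseteq> L\<close> \<open>l \<notin> P\<close> by blast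
  have "l = (\<Union>m'\<in>P. l \<inter> m')"
    using \<open>\<Union>P = V\<close> \<open>l \<in> L\<close> plane unfolding affine_plane_def by blast
  moreover have "finite l" "card l = r"
    using plane \<open>l \<in> L\<close> unfolding affine_plane_def by (auto intro: finite_subset)
  moreover have "(l \<inter> m\<^sub>1) \<inter> (l \<inter> m\<^sub>2) = {}" if "m\<^sub>1 \<in> P" "m\<^sub>2 \<in> P" "m\<^sub>1 \<noteq> m\<^sub>2" for m\<^sub>1 m\<^sub>2
    using P that unfolding parallel_class_def by blast
  ultimately have "r = (\<Sum>m'\<in>P. card (l \<inter> m'))"
    using card_UN_disjoint[OF \<open>finite P\<close>, of "\<lambda>m'. l \<inter> m'"] by auto
  also have "\<dots> = card (l \<inter> m) + (\<Sum>m'\<in>P - {m}. card (l \<inter> m'))"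
    using \<open>finite P\<close> \<open>m \<in> P\<close> by (simp add: sum.remove)
  also have "\<dots> \<le> card (l \<inter> m) + (r - 1)"
    using sum_mono[of "P - {m}" "\<lambda>m'. card (l \<inter> m')" "\<lambda>_. 1"] le1 \<open>card P = r\<close> \<open>finite P\<close> \<open>m \<in> P\<close>
    by auto
  finally have "1 \<le> card (l \<inter> m)"
    using \<open>card P = r\<close> \<open>m \<in> P\<close> \<open>finite P\<close> by (cases r) auto
  then show ?thesis
    using le1[OF \<open>m \<in> P\<close>] by simp
qed

locale labelled_affine_plane =
  fixes r :: nat and V :: "'a set" and L :: "'a set set" and v :: "nat \<Rightarrow> nat \<Rightarrow> 'a"
  assumes order_ge_3: "3 \<le> r"
    and plane: "affine_plane r V L"
    and labelling: "bij_betw (\<lambda>(i, j). v i j) ({1..r} \<times> {1..r}) V"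
    and rows_parallel: "parallel_class r V L {{v i j | j. j \<in> {1..r}} | i. i \<in> {1..r}}"
begin

definition row :: "nat \<Rightarrow> 'a set" where
  "row i = {v i j | j. j \<in> {1..r}}"

abbreviation S :: "'a set" where
  "S \<equiv> S_set r v"

lemma v_eq_iff:
  assumes "i \<in> {1..r}" "j \<in> {1..r}" "i' \<in> {1..r}" "j' \<in> {1..r}"
  shows "v i j = v i' j' \<longleftrightarrow> i = i' \<and> j = j'"
  using inj_onD[OF bij_betw_imp_inj_on[OF labelling], of "(i, j)" "(i', j')"] assms by auto

lemma v_in_V: "i \<in> {1..r} \<Longrightarrow> j \<in> {1..r} \<Longrightarrow> v i j \<in> V"
  using bij_betw_apply[OF labelling, of "(i, j)"] by simp

lemma finite_card_line: "l \<in> L \<Longrightarrow> finite l \<and> card l = r"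
  using plane unfolding affine_plane_def by (auto intro: finite_subset)

lemma rows_parallel_class: "parallel_class r V L (row ` {1..r})"
proof -
  have "row ` {1..r} = {{v i j | j. j \<in> {1..r}} | i. i \<in> {1..r}}"
    by (auto simp: row_def)
  then show ?thesis
    using rows_parallel by simp
qed

lemma row_in_L: "i \<in> {1..r} \<Longrightarrow> row i \<in> L"
  using rows_parallel_class unfolding parallel_class_def by blast

lemma row_subset_V: "i \<in> {1..r} \<Longrightarrow> row i \<subseteq> V"
  using row_in_L plane unfolding affine_plane_def by blast

lemma finite_V: "finite V"
  using plane unfolding affine_plane_def by blast

lemma v_in_S_iff:
  assumes "i \<in> {1..r}" "j \<in> {1..r}"
  shows "v i j \<in> S \<longleftrightarrow> (i = r \<and> j < r) \<or> (i = r - 1 \<and> j = r)"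
proof -
  have "r - 1 \<in> {1..r}" "r \<in> {1..r}"
    using order_ge_3 by auto
  then show ?thesis
    using assms v_eq_iff unfolding S_set_def by auto
qed

lemma row_Diff_S:
  "row 1 - S = row 1" "row (r - 1) - S = row (r - 1) - {v (r - 1) r}" "row r - S = {v r r}"
  using order_ge_3 by (auto simp: row_def v_in_S_iff)

definition tilt :: "'a \<Rightarrow> real" where
  "tilt x = of_bool (x \<in> row (r - 1) - S) - of_bool (x = v r r)"

lemma sum_tilt:
  "finite A \<Longrightarrow> (\<Sum>x\<in>A. tilt x) = real (card (A \<inter> (row (r - 1) - S))) - of_bool (v r r \<in> A)"
  by (simp add: tilt_def sum_subtractf of_bool_def sum.If_cases Int_def)

lemma corner_in_V_Diff_S: "v r r \<in> V - S"
  using order_ge_3 by (simp add: v_in_V v_in_S_iff)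

lemma sum_tilt_V_Diff_S: "(\<Sum>x\<in>V - S. tilt x) = real r - 2"
proof -
  have "r - 1 \<in> {1..r}" "r \<in> {1..r}"
    using order_ge_3 by auto
  then have "(V - S) \<inter> (row (r - 1) - S) = row (r - 1) - S"
    using row_subset_V[of "r - 1"] by blast
  also have "\<dots> = row (r - 1) - {v (r - 1) r}"
    by (rule row_Diff_S(2))
  moreover have "card (row (r - 1) - {v (r - 1) r}) = r - 1"
  proof -
    have "v (r - 1) r \<in> row (r - 1)"
      using \<open>r \<in> {1..r}\<close> unfolding row_def by blast
    then show ?thesis
      using finite_card_line[OF row_in_L[OF \<open>r - 1 \<in> {1..r}\<close>]] by simp
  qed
  ultimately show ?thesis
    using finite_V corner_in_V_Diff_S order_ge_3 by (simp add: sum_tilt of_nat_diff)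
qed

lemma sum_tilt_line_nonpos:
  assumes l: "l \<in> L" "l \<inter> S = {}"
  shows "(\<Sum>x\<in>l. tilt x) \<le> 0"
proof -
  have "r - 1 \<in> {1..r}" "r \<in> {1..r}"
    using order_ge_3 by auto
  have "finite l"
    using finite_card_line[OF l(1)] by blast
  have survivors: "l \<inter> (row (r - 1) - S) = l \<inter> row (r - 1)"
    using l(2) by blast
  show ?thesis
  proof (cases "l \<in> row ` {1..r}")
    case True
    then obtain i where i: "i \<in> {1..r}" "l = row i"
      by blast
    have "v (r - 1) r \<in> row (r - 1) \<inter> S"
      using \<open>r - 1 \<in> {1..r}\<close> \<open>r \<in> {1..r}\<close> by (auto simp: row_def v_in_S_iff)
    then have "i \<noteq> r - 1"
      using i(2) l(2) by auto
    have "v i j \<noteq> v (r - 1) j'" if "j \<in> {1..r}" "j' \<in> {1..r}" for j j'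
      using v_eq_iff[OF i(1) that(1) \<open>r - 1 \<in> {1..r}\<close> that(2)] \<open>i \<noteq> r - 1\<close> by blast
    then have "l \<inter> row (r - 1) = {}"
      using i(2) by (auto simp: row_def)
    then show ?thesis
      using \<open>finite l\<close> survivors by (simp add: sum_tilt)
  next
    case False
    have meets: "card (l \<inter> row i) = 1" if "i \<in> {1..r}" for i
      by (rule affine_plane_card_Int_parallel_class[OF plane rows_parallel_class l(1) False
            imageI[OF that]])
    obtain x where x: "l \<inter> row r = {x}"
      by (rule card_1_singletonE[OF meets[OF \<open>r \<in> {1..r}\<close>]])
    have "l \<inter> row r \<subseteq> row r - S"
      using l(2) by blast
    then have "v r r \<in> l"
      unfolding x row_Diff_S(3) using x by auto
    then show ?thesis
      using \<open>finite l\<close> survivors meets[OF \<open>r - 1 \<in> {1..r}\<close>] by (simp add: sum_tilt)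
  qed
qed

end

theorem mainTheorem3:
  fixes r :: nat and V :: "'a set" and L :: "'a set set"
    and P :: "nat \<Rightarrow> 'a set set" and v :: "nat \<Rightarrow> nat \<Rightarrow> 'a"
  assumes "r \<ge> 3"
    and "affine_plane r V L"
    and "parallel_classes r V L P"
    and "bij_betw (\<lambda>(i, j). v i j) ({1..r} \<times> {1..r}) V"
    and "P 1 = {{v i j | j. j \<in> {1..r}} | i. i \<in> {1..r}}"
    and "P (r + 1) = {{v j i | j. j \<in> {1..r}} | i. i \<in> {1..r}}"
  shows "perturbable (V - S_set r v)
           (top_level_edges (H_edges r L P (S_set r v)) (uniform_weight (V - S_set r v)))"
proof -
  have "1 \<in> {1..r + 1}" "r + 1 \<in> {1..r + 1}" "1 \<noteq> r + 1"
    using assms(1) by auto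
  then have rows: "parallel_class r V L (P 1)" and "P 1 \<inter> P (r + 1) = {}"
    using assms(3) unfolding parallel_classes_def by blast+
  interpret labelled_affine_plane r V L v
    using assms(1,2,4) rows unfolding assms(5) by unfold_locales
  have "row 1 \<in> P 1"
    using assms(1,5) unfolding row_def by auto
  then have row_1: "row 1 \<in> L - P (r + 1)" "row 1 \<inter> S = {}"
    using rows \<open>P 1 \<inter> P (r + 1) = {}\<close> row_Diff_S(1) unfolding parallel_class_def by blast+
  have top: "top_level_edges (H_edges r L P S) (uniform_weight (V - S))
      \<subseteq> {l \<in> L - P (r + 1). l \<inter> S = {}}"
    unfolding H_edges_def
    by (rule top_level_edges_Diff_image[OF _ _ _ row_1])
      (use finite_V corner_in_V_Diff_S finite_card_line in auto)
  show ?thesis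
  proof (rule perturbable_if_total_pos_edges_nonpos)
    show "finite (V - S)"
      using finite_V by simp
    show "0 < (\<Sum>x\<in>V - S. tilt x)"
      using sum_tilt_V_Diff_S order_ge_3 by simp
    show "finite e \<and> e \<noteq> {} \<and> (\<Sum>x\<in>e. tilt x) \<le> 0"
      if "e \<in> top_level_edges (H_edges r L P S) (uniform_weight (V - S))" for e
    proof -
      have "e \<in> L" "e \<inter> S = {}"
        using top that by auto
      then show ?thesis
        using finite_card_line[of e] sum_tilt_line_nonpos order_ge_3 by auto
    qed
  qed
qed

end
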